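(* Let $q$ be a prime power, let $k \ge 2$, let $0 < \varepsilon < 1$, let $\eta \ge 600$, and let $\mathcal{C} \subseteq \mathbb{F}_q^n$ be a linear code of dimension $k$. Let $b \ge 1$ be an integer such that every nonzero codeword of $\mathcal{C}$ has weight at least $b$, and such that for every integer $\alpha \ge 1$ the number of codewords of weight at most $\alpha b$ is at most $(qk)^{\alpha}$. Let $p = \frac{\eta \log_2(k)\log_2(q)}{b \varepsilon^2}$ and assume $p \le 1$. Sample each coordinate $i \in [n]$ independently with probability $p$, and give each sampled coordinate weight $1/p$; let $S$ be the set of sampled coordinates. Then with probability at least $1 - 2^{-(0.19\eta - 110)\log_2 k} \cdot k^{-101}$, for every $c \in \mathcal{C}$, $$(1-\varepsilon)\mathrm{wt}(c) \le \tfrac{1}{p} \,\mathrm{wt}(c|_S) \le (1+\varepsilon)\mathrm{wt}(c).$$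
   Context: $\mathrm{wt}(c)$ is the number of nonzero coordinates of $c$, and $c|_S=(c_i)_{i\in S}$. *)

theory Defs
  imports "HOL-Analysis.Analysis" "HOL-Probability.Probability"
begin

definition wt :: "'a::zero ^ 'n \<Rightarrow> nat" where
  "wt c = card {i. c $ i \<noteq> 0}"

definition wt_restr :: "'a::zero ^ 'n \<Rightarrow> 'n set \<Rightarrow> nat" where
  "wt_restr c S = card {i \<in> S. c $ i \<noteq> 0}"

definition sample_coords :: "real \<Rightarrow> ('n::finite) set pmf" where
  "sample_coords p = map_pmf (\<lambda>f. {i. f i}) (Pi_pmf UNIV False (\<lambda>_. bernoulli_pmf p))"

end

theory Submission
  imports Defs
begin

text \<open>For a single codeword c the number of sampled nonzero coordinates is a binomial
  variable with mean p wt(c), so by a Chernoff bound the weight estimate fails with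
  probability at most 2 exp(-\<epsilon>^2 p wt(c)/4). A union bound over all codewords, grouped by
  the class \<lfloor>wt(c)/b\<rfloor> = y (which contains at most (qk)^(y+1) words and has failure
  probability at most 2 x^y with x = exp(-\<eta> log q log k / 4)), leaves a geometric series
  dominated by its first term 4 (qk)^2 x, and the choice \<eta> \<ge> 600 makes this small.\<close>

lemma expectation_exp_card_sample_coords:
  fixes T :: "'n::finite set"
  assumes "0 \<le> p" "p \<le> 1"
  shows "measure_pmf.expectation (sample_coords p) (\<lambda>S. exp (s * real (card (T \<inter> S))))
         = (1 - p + p * exp s) ^ card T"
proof -
  let ?g = "\<lambda>i v. if i \<in> T \<and> v then exp s else 1"
  have prod_form: "exp (s * real (card (T \<inter> {i. f i}))) = (\<Prod>i\<in>UNIV. ?g i (f i))" for f :: "'n \<Rightarrow> bool"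
  proof -
    have "(\<Prod>i\<in>UNIV. ?g i (f i)) = (\<Prod>i\<in>T \<inter> {i. f i}. exp s)"
      by (rule prod.mono_neutral_cong_right) auto
    then show ?thesis by (simp add: exp_of_nat_mult[symmetric] mult.commute)
  qed
  have "measure_pmf.expectation (sample_coords p) (\<lambda>S. exp (s * real (card (T \<inter> S))))
        = measure_pmf.expectation (Pi_pmf UNIV False (\<lambda>_. bernoulli_pmf p)) (\<lambda>f. \<Prod>i\<in>UNIV. ?g i (f i))"
    by (simp add: sample_coords_def prod_form del: Int_iff)
  also have "\<dots> = (\<Prod>i\<in>UNIV. measure_pmf.expectation (bernoulli_pmf p) (?g i))"
    by (rule expectation_prod_Pi_pmf) (auto intro: integrable_measure_pmf_finite)
  also have "\<dots> = (\<Prod>i\<in>UNIV. if i \<in> T then 1 - p + p * exp s else 1)"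
    using assms by (intro prod.cong refl) (simp add: algebra_simps)
  also have "\<dots> = (1 - p + p * exp s) ^ card T"
    by (simp add: prod.If_cases)
  finally show ?thesis .
qed

lemma exp_le_one_plus_plus_square:
  fixes s :: real
  assumes "\<bar>s\<bar> \<le> 1"
  shows "exp s \<le> 1 + s + s\<^sup>2"
proof (cases "s \<ge> 0")
  case True
  then show ?thesis using assms exp_bound by simp
next
  case False
  have "1 - s \<le> exp (- s)" using exp_ge_add_one_self[of "- s"] by simp
  then have "exp s \<le> 1 / (1 - s)" using False by (simp add: exp_minus field_simps)
  also have "\<dots> \<le> 1 + s + s\<^sup>2"
    using False mult_nonpos_nonneg[of s "s * s"] by (simp add: field_simps power2_eq_square)
  finally show ?thesis .
qed

lemma prob_sample_coords_card_tail:
  fixes T :: "'n::finite set"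
  assumes "0 \<le> p" "p \<le> 1" "\<bar>s\<bar> \<le> 1"
  shows "measure_pmf.prob (sample_coords p) {S. a \<le> s * real (card (T \<inter> S))}
         \<le> exp (p * real (card T) * (s + s\<^sup>2) - a)"
proof -
  let ?X = "\<lambda>S. exp (s * real (card (T \<inter> S)))"
  have "1 - p + p * exp s \<le> 1 + p * (s + s\<^sup>2)"
    using mult_left_mono[OF exp_le_one_plus_plus_square[OF assms(3)] assms(1)]
    by (simp add: algebra_simps)
  also have "\<dots> \<le> exp (p * (s + s\<^sup>2))" by (rule exp_ge_add_one_self)
  finally have "(1 - p + p * exp s) ^ card T \<le> exp (p * (s + s\<^sup>2)) ^ card T"
    using assms by (intro power_mono) (auto intro: add_nonneg_nonneg)
  then have mgf: "measure_pmf.expectation (sample_coords p) ?X \<le> exp (p * real (card T) * (s + s\<^sup>2))"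
    using assms by (simp add: expectation_exp_card_sample_coords exp_of_nat_mult[symmetric] mult_ac)
  have "measure_pmf.prob (sample_coords p) {S. a \<le> s * real (card (T \<inter> S))}
        = measure_pmf.prob (sample_coords p) {S \<in> space (sample_coords p). exp a \<le> ?X S}"
    by simp
  also have "\<dots> \<le> measure_pmf.expectation (sample_coords p) ?X / exp a"
    by (rule integral_Markov_inequality_measure[where A = UNIV])
      (auto intro: integrable_measure_pmf_finite)
  also have "\<dots> \<le> exp (p * real (card T) * (s + s\<^sup>2)) / exp a"
    using mgf by (simp add: divide_right_mono)
  finally show ?thesis by (simp add: exp_diff)
qed

lemma prob_sample_coords_card_deviation:
  fixes T :: "'n::finite set"
  assumes p: "0 \<le> p" "p \<le> 1" and e: "0 < e" "e < 1"
  defines "\<mu> \<equiv> p * real (card T)"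
  shows "measure_pmf.prob (sample_coords p)
           {S. real (card (T \<inter> S)) \<le> (1 - e) * \<mu> \<or> (1 + e) * \<mu> \<le> real (card (T \<inter> S))}
         \<le> 2 * exp (- (e\<^sup>2 * \<mu> / 4))"
proof -
  let ?Pr = "measure_pmf.prob (sample_coords p)"
  txt \<open>Both tails use the exponential moment with s = \<plusminus>e/2.\<close>
  have "{S. (1 + e) * \<mu> \<le> real (card (T \<inter> S))} = {S. e/2 * ((1 + e) * \<mu>) \<le> e/2 * real (card (T \<inter> S))}"
    using e by auto
  then have upper: "?Pr {S. (1 + e) * \<mu> \<le> real (card (T \<inter> S))} \<le> exp (- (e\<^sup>2 * \<mu> / 4))"
    using prob_sample_coords_card_tail[OF p, of "e/2" "e/2 * ((1 + e) * \<mu>)" T] e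
    by (simp add: \<mu>_def algebra_simps power2_eq_square)
  have "{S. real (card (T \<inter> S)) \<le> (1 - e) * \<mu>} = {S. - e/2 * ((1 - e) * \<mu>) \<le> - e/2 * real (card (T \<inter> S))}"
    using e by auto
  then have lower: "?Pr {S. real (card (T \<inter> S)) \<le> (1 - e) * \<mu>} \<le> exp (- (e\<^sup>2 * \<mu> / 4))"
    using prob_sample_coords_card_tail[OF p, of "- e/2" "- e/2 * ((1 - e) * \<mu>)" T] e
    by (simp add: \<mu>_def algebra_simps power2_eq_square)
  have "?Pr {S. real (card (T \<inter> S)) \<le> (1 - e) * \<mu> \<or> (1 + e) * \<mu> \<le> real (card (T \<inter> S))}
        \<le> ?Pr {S. real (card (T \<inter> S)) \<le> (1 - e) * \<mu>} + ?Pr {S. (1 + e) * \<mu> \<le> real (card (T \<inter> S))}"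
    by (subst Collect_disj_eq) (rule measure_Un_le; simp)
  then show ?thesis using upper lower by simp
qed

definition restr_wt_approx :: "real \<Rightarrow> real \<Rightarrow> 'a::zero ^ 'n \<Rightarrow> 'n set \<Rightarrow> bool" where
  "restr_wt_approx p e c S \<longleftrightarrow>
     (1 - e) * real (wt c) \<le> real (wt_restr c S) / p \<and> real (wt_restr c S) / p \<le> (1 + e) * real (wt c)"

lemma prob_not_restr_wt_approx:
  fixes c :: "'a::zero ^ 'n::finite"
  assumes p: "0 < p" "p \<le> 1" and e: "0 < e" "e < 1"
  shows "measure_pmf.prob (sample_coords p) {S. \<not> restr_wt_approx p e c S}
         \<le> 2 * exp (- (e\<^sup>2 * (p * real (wt c)) / 4))"
proof -
  define T where "T = {i. c $ i \<noteq> 0}"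
  have "wt_restr c S = card (T \<inter> S)" for S
    unfolding wt_restr_def T_def by (rule arg_cong[where f = card]) auto
  moreover have "wt c = card T" unfolding wt_def T_def ..
  ultimately have "{S. \<not> restr_wt_approx p e c S}
     \<subseteq> {S. real (card (T \<inter> S)) \<le> (1 - e) * (p * real (card T)) \<or> (1 + e) * (p * real (card T)) \<le> real (card (T \<inter> S))}"
    using p by (auto simp: restr_wt_approx_def field_simps)
  then have "measure_pmf.prob (sample_coords p) {S. \<not> restr_wt_approx p e c S}
     \<le> measure_pmf.prob (sample_coords p)
           {S. real (card (T \<inter> S)) \<le> (1 - e) * (p * real (card T)) \<or> (1 + e) * (p * real (card T)) \<le> real (card (T \<inter> S))}"
    by (rule measure_pmf.finite_measure_mono) simp
  also have "\<dots> \<le> 2 * exp (- (e\<^sup>2 * (p * real (wt c)) / 4))"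
    using prob_sample_coords_card_deviation[of p e T] p e \<open>wt c = card T\<close> by simp
  finally show ?thesis .
qed

lemma prob_all_restr_wt_approx:
  fixes C :: "('a::{zero,finite} ^ 'n::finite) set"
  assumes "0 < p" "p \<le> 1" "0 < e" "e < 1"
  shows "measure_pmf.prob (sample_coords p) {S. \<forall>c\<in>C. restr_wt_approx p e c S}
         \<ge> 1 - (\<Sum>c\<in>C - {0}. 2 * exp (- (e\<^sup>2 * (p * real (wt c)) / 4)))"
proof -
  let ?Pr = "measure_pmf.prob (sample_coords p)"
  have "restr_wt_approx p e 0 S" for S
    by (simp add: restr_wt_approx_def wt_def wt_restr_def)
  then have "UNIV - {S. \<forall>c\<in>C. restr_wt_approx p e c S} = (\<Union>c\<in>C - {0}. {S. \<not> restr_wt_approx p e c S})"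
    by blast
  then have "?Pr (UNIV - {S. \<forall>c\<in>C. restr_wt_approx p e c S})
      \<le> (\<Sum>c\<in>C - {0}. ?Pr {S. \<not> restr_wt_approx p e c S})"
    by (simp add: measure_pmf.finite_measure_subadditive_finite)
  also have "\<dots> \<le> (\<Sum>c\<in>C - {0}. 2 * exp (- (e\<^sup>2 * (p * real (wt c)) / 4)))"
    using assms by (intro sum_mono prob_not_restr_wt_approx)
  finally show ?thesis
    using measure_pmf.prob_compl[of "{S. \<forall>c\<in>C. restr_wt_approx p e c S}" "sample_coords p"] by simp
qed

lemma sum_power_le_twice:
  fixes r :: real
  assumes "finite Y" "0 \<notin> Y" "0 \<le> r" "r \<le> 1/2"
  shows "(\<Sum>y\<in>Y. r ^ y) \<le> 2 * r"
proof -
  have geometric: "(\<Sum>y\<in>{1..n}. r ^ y) \<le> 2 * r - 2 * r ^ (n + 1)" for n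
  proof (induction n)
    case (Suc n)
    have "r ^ (n + 1) * (2 * r) \<le> r ^ (n + 1)"
      using assms by (intro mult_left_le) auto
    with Suc show ?case by (simp add: sum.cl_ivl_Suc field_simps)
  qed simp
  obtain n where "Y \<subseteq> {1..n}"
    using assms(1,2) finite_nat_set_iff_bounded_le[of Y] by (metis atLeastAtMost_iff less_one not_le subsetI)
  then have "(\<Sum>y\<in>Y. r ^ y) \<le> (\<Sum>y\<in>{1..n}. r ^ y)"
    using assms by (intro sum_mono2) auto
  also have "\<dots> \<le> 2 * r"
    using geometric[of n] assms by (smt (verit) zero_le_power)
  finally show ?thesis .
qed

lemma card_wt_div_eq_le:
  fixes C :: "('a::{zero,finite} ^ 'n::finite) set"
  assumes "b \<ge> 1"
  shows "card {c \<in> C. wt c div b = y} \<le> card {c \<in> C. wt c \<le> (y + 1) * b}"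
proof (rule card_mono)
  show "{c \<in> C. wt c div b = y} \<subseteq> {c \<in> C. wt c \<le> (y + 1) * b}"
    using assms by (auto simp: less_imp_le dividend_less_div_times)
qed simp

lemma sum_power_wt_div_le:
  fixes C :: "('a::{zero,finite} ^ 'n::finite) set" and M x :: real
  assumes b: "b \<ge> 1"
    and minwt: "\<forall>c\<in>C. c \<noteq> 0 \<longrightarrow> wt c \<ge> b"
    and count: "\<forall>\<alpha>::nat. \<alpha> \<ge> 1 \<longrightarrow> real (card {c\<in>C. wt c \<le> \<alpha> * b}) \<le> M ^ \<alpha>"
    and x: "0 \<le> x" "M * x \<le> 1/2"
  shows "(\<Sum>c\<in>C - {0}. x ^ (wt c div b)) \<le> 2 * M\<^sup>2 * x"
proof -
  let ?\<gamma> = "\<lambda>c. wt c div b"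
  have M: "M \<ge> 0" using count[rule_format, of 1] of_nat_0_le_iff order_trans by fastforce
  have "(\<Sum>c\<in>C - {0}. x ^ ?\<gamma> c) = (\<Sum>y\<in>?\<gamma> ` (C - {0}). real (card {c \<in> C - {0}. ?\<gamma> c = y}) * x ^ y)"
    by (subst sum.image_gen[of "C - {0}" _ ?\<gamma>]) simp_all
  also have "\<dots> \<le> (\<Sum>y\<in>?\<gamma> ` (C - {0}). M ^ (y + 1) * x ^ y)"
  proof (intro sum_mono mult_right_mono)
    fix y
    have "card {c \<in> C - {0}. ?\<gamma> c = y} \<le> card {c \<in> C. ?\<gamma> c = y}"
      by (rule card_mono) auto
    also have "\<dots> \<le> card {c \<in> C. wt c \<le> (y + 1) * b}"
      using b by (rule card_wt_div_eq_le)
    finally show "real (card {c \<in> C - {0}. ?\<gamma> c = y}) \<le> M ^ (y + 1)"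
      using count[rule_format, of "y + 1"] by simp
  qed (use x in simp)
  also have "\<dots> = M * (\<Sum>y\<in>?\<gamma> ` (C - {0}). (M * x) ^ y)"
    by (simp add: sum_distrib_left power_mult_distrib mult.assoc)
  also have "\<dots> \<le> M * (2 * (M * x))"
  proof (intro mult_left_mono sum_power_le_twice)
    show "0 \<notin> ?\<gamma> ` (C - {0})"
      using minwt b by (auto simp: div_eq_0_iff not_less)
  qed (use M x in auto)
  finally show ?thesis by (simp add: power2_eq_square)
qed

lemma exp_le_exp_power_div:
  fixes t :: real
  assumes "0 \<le> t"
  shows "exp (- (t * real w / 4)) \<le> exp (- (t * real b / 4)) ^ (w div b)"
proof -
  have "real b * real (w div b) \<le> real w"
    by (metis of_nat_le_iff of_nat_mult div_times_less_eq_dividend mult.commute)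
  then have "t * real b * real (w div b) / 4 \<le> t * real w / 4"
    using assms by (simp add: mult.assoc mult_left_mono)
  then show ?thesis
    by (simp add: exp_of_nat_mult[symmetric] mult_ac)
qed

lemma exp_minus_le_two_powr_minus:
  fixes t :: real
  assumes "0 \<le> t"
  shows "exp (- t) \<le> 2 powr (- t)"
  using assms ln_2_less_1 by (simp add: powr_def mult_left_le)

lemma failure_bound_numeric:
  fixes q k \<eta> :: real
  assumes q: "q \<ge> 2" and k: "k \<ge> 2" and \<eta>: "\<eta> \<ge> 600"
  defines "x \<equiv> exp (- (\<eta> * log 2 q * log 2 k / 4))"
  shows "q * k * x \<le> 1/2"
    and "4 * (q * k)\<^sup>2 * x \<le> 2 powr (- (0.19 * \<eta> - 110) * log 2 k) * k powr (-101)"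
proof -
  define a where "a = log 2 q"
  define l where "l = log 2 k"
  have a: "a \<ge> 1" and l: "l \<ge> 1" using q k by (simp_all add: a_def l_def)
  have al: "a * l \<ge> a" "a * l \<ge> l" using a l by (simp_all add: mult_le_cancel_left1 mult_le_cancel_right1)
  have qk: "q * k = 2 powr (a + l)" using q k by (simp add: a_def l_def powr_add)
  have "\<eta> * a * l \<ge> 600 * (a * l)" using \<eta> al a by (simp add: mult.assoc mult_right_mono)
  then have x: "x \<le> 2 powr (- (\<eta> * a * l / 4))"
    using al a by (simp add: x_def a_def l_def exp_minus_le_two_powr_minus)
  then have "q * k * x \<le> 2 powr (a + l) * 2 powr (- (\<eta> * a * l / 4))"
    by (simp add: qk)
  also have "\<dots> \<le> 2 powr (-1)"
    unfolding powr_add[symmetric] using \<open>\<eta> * a * l \<ge> 600 * (a * l)\<close> al a by (intro powr_mono) linarith+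
  finally show "q * k * x \<le> 1/2" by (simp add: powr_minus)
  have "\<eta> * (a * l / 4 - 0.19 * l) \<ge> 600 * (a * l / 4 - 0.19 * l)"
    using \<eta> al l by (intro mult_right_mono) auto
  then have "2 + 2 * (a + l) - \<eta> * a * l / 4 \<le> - (0.19 * \<eta> - 110) * l - 101 * l"
    using al a by (simp add: algebra_simps, linarith)
  have "4 * (q * k)\<^sup>2 * x \<le> 4 * (q * k)\<^sup>2 * 2 powr (- (\<eta> * a * l / 4))"
    using x by (simp add: mult_left_mono)
  also have "\<dots> = 2 powr 2 * 2 powr (2 * (a + l)) * 2 powr (- (\<eta> * a * l / 4))"
    using powr_power[of 2 "a + l" 2] by (simp add: qk)
  also have "\<dots> = 2 powr (2 + 2 * (a + l) - \<eta> * a * l / 4)"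
    by (simp only: powr_add[symmetric] diff_conv_add_uminus)
  also have "\<dots> \<le> 2 powr (- (0.19 * \<eta> - 110) * l - 101 * l)"
    using \<open>2 + 2 * (a + l) - _ \<le> _\<close> by (intro powr_mono) auto
  also have "\<dots> = 2 powr (- (0.19 * \<eta> - 110) * l) * k powr (-101)"
    using k by (simp add: l_def powr_diff powr_minus_divide powr_powr[symmetric] mult.commute)
  finally show "4 * (q * k)\<^sup>2 * x \<le> 2 powr (- (0.19 * \<eta> - 110) * log 2 k) * k powr (-101)"
    by (simp add: l_def)
qed

theorem claim4p3:
  fixes C :: "(('a::{finite,field}) ^ ('n::finite)) set"
    and k b :: nat and \<epsilon> \<eta> p :: real
  assumes code: "vec.subspace C"
    and dimC: "vec.dim C = k"
    and k2: "k \<ge> 2"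
    and eps: "0 < \<epsilon>" "\<epsilon> < 1"
    and eta: "\<eta> \<ge> 600"
    and b1: "b \<ge> 1"
    and minwt: "\<forall>c\<in>C. c \<noteq> 0 \<longrightarrow> wt c \<ge> b"
    and count: "\<forall>\<alpha>::nat. \<alpha> \<ge> 1 \<longrightarrow>
                  real (card {c\<in>C. wt c \<le> \<alpha> * b}) \<le> (real CARD('a) * real k) ^ \<alpha>"
    and p_def: "p = \<eta> * log 2 (real k) * log 2 (real CARD('a)) / (real b * \<epsilon>\<^sup>2)"
    and p1: "p \<le> 1"
  shows "measure_pmf.prob (sample_coords p)
           {S. \<forall>c\<in>C. (1 - \<epsilon>) * real (wt c) \<le> real (wt_restr c S) / p
                    \<and> real (wt_restr c S) / p \<le> (1 + \<epsilon>) * real (wt c)}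
         \<ge> 1 - 2 powr (- (0.19 * \<eta> - 110) * log 2 (real k)) * real k powr (-101)"
proof -
  txt \<open>Linearity and the dimension of C enter only through the counting hypothesis.\<close>
  define q where "q = real CARD('a)"
  define x where "x = exp (- (\<eta> * log 2 q * log 2 (real k) / 4))"
  have q: "q \<ge> 2"
    using card_mono[of UNIV "{0, 1::'a}"] by (simp add: q_def)
  have p0: "p > 0"
    using q k2 eps eta b1 by (simp add: p_def q_def)
  have "x = exp (- (\<epsilon>\<^sup>2 * p * real b / 4))"
    using eps b1 by (simp add: x_def p_def q_def)
  then have "(\<Sum>c\<in>C - {0}. 2 * exp (- (\<epsilon>\<^sup>2 * (p * real (wt c)) / 4))) \<le> 2 * (\<Sum>c\<in>C - {0}. x ^ (wt c div b))"
    using exp_le_exp_power_div[of "\<epsilon>\<^sup>2 * p"] p0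
    by (auto simp: sum_distrib_left mult.assoc intro!: sum_mono)
  also have "\<dots> \<le> 2 * (2 * (q * real k)\<^sup>2 * x)"
    using failure_bound_numeric(1)[OF q _ eta] k2 b1 minwt count
    by (intro mult_left_mono sum_power_wt_div_le) (auto simp: x_def q_def mult.assoc)
  also have "\<dots> \<le> 2 powr (- (0.19 * \<eta> - 110) * log 2 (real k)) * real k powr (-101)"
    using failure_bound_numeric(2)[OF q _ eta, of "real k"] k2 by (simp add: x_def mult.assoc)
  finally show ?thesis
    using prob_all_restr_wt_approx[OF p0 p1 eps, of C] by (simp add: restr_wt_approx_def)
qed

end
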